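(* Let $R \subseteq S$ be an extension of commutative rings, and let $R^*$ be the strict closure of $R$ in $S$. Then $R^* \subseteq R + MS$ (inside $S$) for every maximal ideal $M$ of $R$.
   Context: For an extension of commutative rings $R \subseteq S$, the strict closure of $R$ in $S$ is $R^* = \{\alpha \in S \mid \alpha\otimes 1 = 1\otimes \alpha \text{ in } S\otimes_R S\}$; it is a subring of $S$ containing $R$. *)

theory Defs
  imports Main
begin

text \<open>The ambient ring S is a type of class comm_ring_1; the subring R is a subset.\<close>

definition is_subring :: "'a::comm_ring_1 set \<Rightarrow> bool" where
  "is_subring R \<longleftrightarrow> 0 \<in> R \<and> 1 \<in> R \<and> (\<forall>x\<in>R. \<forall>y\<in>R. x + y \<in> R \<and> x * y \<in> R) \<and> (\<forall>x\<in>R. - x \<in> R)"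

definition is_ideal_of :: "'a::comm_ring_1 set \<Rightarrow> 'a set \<Rightarrow> bool" where
  "is_ideal_of R M \<longleftrightarrow> M \<subseteq> R \<and> 0 \<in> M \<and> (\<forall>x\<in>M. \<forall>y\<in>M. x + y \<in> M)
     \<and> (\<forall>x\<in>M. - x \<in> M) \<and> (\<forall>r\<in>R. \<forall>x\<in>M. r * x \<in> M)"

definition is_maximal_ideal_of :: "'a::comm_ring_1 set \<Rightarrow> 'a set \<Rightarrow> bool" where
  "is_maximal_ideal_of R M \<longleftrightarrow> is_ideal_of R M \<and> M \<noteq> R \<and>
     (\<forall>J. is_ideal_of R J \<and> M \<subseteq> J \<longrightarrow> J = M \<or> J = R)"

definition ext_ideal :: "'a::comm_ring_1 set \<Rightarrow> 'a set" where
  "ext_ideal M = {x. \<exists>(n::nat) m (s::nat \<Rightarrow> 'a). (\<forall>i<n. m i \<in> M) \<and> x = (\<Sum>i<n. m i * s i)}"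

text \<open>Tensor product S \<otimes>_R S, built as the free abelian group on S \<times> S
  (finitely supported integer-valued functions) modulo the subgroup generated by the
  biadditivity and R-balancedness relations. gen p is the basis element of p.\<close>
definition gen :: "'a \<times> 'a \<Rightarrow> ('a \<times> 'a \<Rightarrow> int)" where
  "gen p = (\<lambda>q. if q = p then 1 else 0)"

inductive_set tensor_rel :: "'a::comm_ring_1 set \<Rightarrow> ('a \<times> 'a \<Rightarrow> int) set" for R where
  zero: "(\<lambda>_. 0) \<in> tensor_rel R"
| addl: "(\<lambda>q. gen (s + s', t) q - gen (s, t) q - gen (s', t) q) \<in> tensor_rel R"
| addr: "(\<lambda>q. gen (s, t + t') q - gen (s, t) q - gen (s, t') q) \<in> tensor_rel R"
| bal: "r \<in> R \<Longrightarrow> (\<lambda>q. gen (r * s, t) q - gen (s, r * t) q) \<in> tensor_rel R"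
| add: "x \<in> tensor_rel R \<Longrightarrow> y \<in> tensor_rel R \<Longrightarrow> (\<lambda>q. x q + y q) \<in> tensor_rel R"
| neg: "x \<in> tensor_rel R \<Longrightarrow> (\<lambda>q. - x q) \<in> tensor_rel R"

definition tensor_eq :: "'a::comm_ring_1 set \<Rightarrow> 'a \<times> 'a \<Rightarrow> 'a \<times> 'a \<Rightarrow> bool" where
  "tensor_eq R p p' \<longleftrightarrow> (\<lambda>q. gen p q - gen p' q) \<in> tensor_rel R"

definition strict_closure :: "'a::comm_ring_1 set \<Rightarrow> 'a set" where
  "strict_closure R = {\<alpha>. tensor_eq R (\<alpha>, 1) (1, \<alpha>)}"

end

theory Submission
  imports Defs
begin

text \<open>
  Elements of \<open>S \<otimes>\<^sub>R S\<close> can be tested against \<open>R\<close>-balanced biadditive maps, so it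
  suffices to find one that sends \<open>\<alpha> \<otimes> 1 - 1 \<otimes> \<alpha>\<close> to \<open>c - \<alpha>\<close> modulo \<open>MS\<close> for some
  \<open>c \<in> R\<close>. If \<open>1 \<in> MS\<close> there is nothing to prove. Otherwise Zorn's lemma gives an
  \<open>R\<close>-submodule \<open>N \<supseteq> MS\<close> of \<open>S\<close> maximal with \<open>1 \<notin> N\<close>; maximality of \<open>N\<close> and of \<open>M\<close>
  force \<open>S = R + N\<close> and \<open>R \<inter> N = M\<close>, i.e. \<open>S/N \<cong> R/M\<close>. Choosing representatives gives
  a map \<open>c : S \<rightarrow> R\<close> that is \<open>R\<close>-linear modulo \<open>M\<close> with \<open>c 1 \<equiv> 1\<close>, and
  \<open>s \<otimes> t \<mapsto> c(s) t\<close> is the required map into \<open>S/MS\<close>: it sends \<open>\<alpha> \<otimes> 1 - 1 \<otimes> \<alpha>\<close>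
  to \<open>c(\<alpha>) - c(1) \<alpha> \<equiv> c(\<alpha>) - \<alpha>\<close>.
\<close>

definition is_add_subgroup :: "'a::ab_group_add set \<Rightarrow> bool" where
  "is_add_subgroup I \<longleftrightarrow> 0 \<in> I \<and> (\<forall>x\<in>I. \<forall>y\<in>I. x + y \<in> I) \<and> (\<forall>x\<in>I. - x \<in> I)"

definition is_submodule :: "'a::comm_ring_1 set \<Rightarrow> 'a set \<Rightarrow> bool" where
  "is_submodule R N \<longleftrightarrow> is_add_subgroup N \<and> (\<forall>r\<in>R. \<forall>x\<in>N. r * x \<in> N)"

lemma add_subgroup_zero: "is_add_subgroup I \<Longrightarrow> 0 \<in> I"
  and add_subgroup_add: "is_add_subgroup I \<Longrightarrow> x \<in> I \<Longrightarrow> y \<in> I \<Longrightarrow> x + y \<in> I"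
  and add_subgroup_uminus: "is_add_subgroup I \<Longrightarrow> x \<in> I \<Longrightarrow> - x \<in> I"
  by (simp_all add: is_add_subgroup_def)

lemma add_subgroup_diff: "is_add_subgroup I \<Longrightarrow> x \<in> I \<Longrightarrow> y \<in> I \<Longrightarrow> x - y \<in> I"
  by (metis add_subgroup_add add_subgroup_uminus diff_conv_add_uminus)

lemma submodule_add_subgroup: "is_submodule R N \<Longrightarrow> is_add_subgroup N"
  and submodule_mult: "is_submodule R N \<Longrightarrow> r \<in> R \<Longrightarrow> x \<in> N \<Longrightarrow> r * x \<in> N"
  by (simp_all add: is_submodule_def)

lemma subring_add_subgroup: "is_subring R \<Longrightarrow> is_add_subgroup R"
  and subring_one: "is_subring R \<Longrightarrow> 1 \<in> R"
  and subring_mult: "is_subring R \<Longrightarrow> x \<in> R \<Longrightarrow> y \<in> R \<Longrightarrow> x * y \<in> R"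
  by (simp_all add: is_subring_def is_add_subgroup_def)

lemma is_ideal_of_iff_submodule: "is_ideal_of R M \<longleftrightarrow> M \<subseteq> R \<and> is_submodule R M"
  unfolding is_ideal_of_def is_submodule_def is_add_subgroup_def by blast

lemma zero_mem_ext_ideal: "0 \<in> ext_ideal M"
  unfolding ext_ideal_def by (intro CollectI exI[of _ "0::nat"]) simp

lemma ext_ideal_cons:
  assumes "m \<in> M" and "x \<in> ext_ideal M"
  shows "m * t + x \<in> ext_ideal M"
proof -
  obtain n :: nat and ms ss where ms: "\<forall>i<n. ms i \<in> M" and x: "x = (\<Sum>i<n. ms i * ss i)"
    using assms(2) unfolding ext_ideal_def by blast
  have "\<forall>i<Suc n. case_nat m ms i \<in> M"
    using assms(1) ms by (auto split: nat.split)
  moreover have "m * t + x = (\<Sum>i<Suc n. case_nat m ms i * case_nat t ss i)"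
    unfolding x sum.lessThan_Suc_shift by simp
  ultimately show ?thesis
    unfolding ext_ideal_def
    by (intro CollectI exI[of _ "Suc n"] exI[of _ "case_nat m ms"] exI[of _ "case_nat t ss"]) simp
qed

lemma mult_mem_ext_ideal: "m \<in> M \<Longrightarrow> m * t \<in> ext_ideal M"
  using ext_ideal_cons[OF _ zero_mem_ext_ideal] by fastforce

lemma ext_ideal_add:
  assumes "x \<in> ext_ideal M" and "y \<in> ext_ideal M"
  shows "x + y \<in> ext_ideal M"
proof -
  obtain n :: nat and ms ss where "\<forall>i<n. ms i \<in> M" and "x = (\<Sum>i<n. ms i * ss i)"
    using assms(1) unfolding ext_ideal_def by blast
  then show ?thesis
  proof (induction n arbitrary: x)
    case 0
    then show ?case using assms(2) by simp
  next
    case (Suc n)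
    have "(\<Sum>i<n. ms i * ss i) + y \<in> ext_ideal M"
      using Suc by simp
    then have "ms n * ss n + ((\<Sum>i<n. ms i * ss i) + y) \<in> ext_ideal M"
      using Suc.prems(1) by (intro ext_ideal_cons) simp_all
    then show ?case
      using Suc.prems(2) by (simp add: ac_simps)
  qed
qed

lemma ext_ideal_mult:
  assumes "x \<in> ext_ideal M"
  shows "t * x \<in> ext_ideal M"
proof -
  obtain n :: nat and ms ss where ms: "\<forall>i<n. ms i \<in> M" and x: "x = (\<Sum>i<n. ms i * ss i)"
    using assms unfolding ext_ideal_def by blast
  have "t * x = (\<Sum>i<n. ms i * (t * ss i))"
    unfolding x sum_distrib_left by (simp add: ac_simps)
  with ms show ?thesis
    unfolding ext_ideal_def by (intro CollectI exI[of _ n] exI[of _ ms] exI[of _ "\<lambda>i. t * ss i"]) simp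
qed

lemma is_add_subgroup_ext_ideal: "is_add_subgroup (ext_ideal M)"
  unfolding is_add_subgroup_def
  using zero_mem_ext_ideal ext_ideal_add ext_ideal_mult[of _ M "-1"] by auto

lemma is_submodule_ext_ideal: "is_submodule R (ext_ideal M)"
  unfolding is_submodule_def using is_add_subgroup_ext_ideal ext_ideal_mult by blast

lemma is_submodule_add_multiples:
  assumes R: "is_subring R" and N: "is_submodule R N"
  shows "is_submodule R {n + u * s | n u. n \<in> N \<and> u \<in> R}" (is "is_submodule R ?N'")
  unfolding is_submodule_def is_add_subgroup_def
proof (intro conjI ballI)
  note R' = subring_add_subgroup[OF R] and N' = submodule_add_subgroup[OF N]
  have mem: "a + b * s \<in> ?N'" if "a \<in> N" "b \<in> R" for a b
    using that by blast
  have "0 = 0 + 0 * s"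
    by simp
  also have "\<dots> \<in> ?N'"
    using add_subgroup_zero[OF N'] add_subgroup_zero[OF R'] by (rule mem)
  finally show "0 \<in> ?N'" .
  fix x assume "x \<in> ?N'"
  then obtain n u where x: "x = n + u * s" "n \<in> N" "u \<in> R"
    by blast
  have "- x = (- n) + (- u) * s"
    by (simp add: x(1))
  also have "\<dots> \<in> ?N'"
    using add_subgroup_uminus[OF N' x(2)] add_subgroup_uminus[OF R' x(3)] by (rule mem)
  finally show "- x \<in> ?N'" .
  show "r * x \<in> ?N'" if r: "r \<in> R" for r
  proof -
    have "r * x = r * n + (r * u) * s"
      by (simp add: x(1) algebra_simps)
    also have "\<dots> \<in> ?N'"
      using submodule_mult[OF N r x(2)] subring_mult[OF R r x(3)] by (rule mem)
    finally show ?thesis .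
  qed
  fix y assume "y \<in> ?N'"
  then obtain n' u' where y: "y = n' + u' * s" "n' \<in> N" "u' \<in> R"
    by blast
  have "x + y = (n + n') + (u + u') * s"
    by (simp add: x(1) y(1) algebra_simps)
  also have "\<dots> \<in> ?N'"
    using add_subgroup_add[OF N' x(2) y(2)] add_subgroup_add[OF R' x(3) y(3)] by (rule mem)
  finally show "x + y \<in> ?N'" .
qed

lemma is_submodule_Union_chain:
  assumes "C \<noteq> {}" and sub: "\<And>X. X \<in> C \<Longrightarrow> is_submodule R X"
    and chain: "\<And>X Y. X \<in> C \<Longrightarrow> Y \<in> C \<Longrightarrow> X \<subseteq> Y \<or> Y \<subseteq> X"
  shows "is_submodule R (\<Union>C)"
  unfolding is_submodule_def is_add_subgroup_def
proof (intro conjI ballI)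
  show "0 \<in> \<Union>C"
    using assms(1) sub add_subgroup_zero submodule_add_subgroup by blast
  fix x assume "x \<in> \<Union>C"
  then obtain X where X: "X \<in> C" "x \<in> X"
    by blast
  show "- x \<in> \<Union>C"
    using sub[OF X(1)] X add_subgroup_uminus submodule_add_subgroup by blast
  show "r * x \<in> \<Union>C" if "r \<in> R" for r
    using sub[OF X(1)] X that submodule_mult by blast
  fix y assume "y \<in> \<Union>C"
  then obtain Y where Y: "Y \<in> C" "y \<in> Y"
    by blast
  obtain Z where "Z \<in> C" "x \<in> Z" "y \<in> Z"
    using chain[OF X(1) Y(1)] X Y by blast
  then show "x + y \<in> \<Union>C"
    using sub[OF \<open>Z \<in> C\<close>] add_subgroup_add submodule_add_subgroup by blast
qed

lemma exists_maximal_submodule_avoiding_one: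
  assumes "is_submodule R I" and "1 \<notin> I"
  obtains N where "I \<subseteq> N" "is_submodule R N" "1 \<notin> N"
    "\<And>N'. is_submodule R N' \<Longrightarrow> N \<subseteq> N' \<Longrightarrow> 1 \<notin> N' \<Longrightarrow> N' = N"
proof -
  let ?A = "{N. I \<subseteq> N \<and> is_submodule R N \<and> 1 \<notin> N}"
  have "\<exists>N\<in>?A. \<forall>N'\<in>?A. N \<subseteq> N' \<longrightarrow> N' = N"
  proof (rule subset_Zorn_nonempty)
    have "I \<in> ?A"
      using assms by simp
    then show "?A \<noteq> {}"
      by blast
    fix C assume "C \<noteq> {}" and "subset.chain ?A C"
    then have CA: "C \<subseteq> ?A" and chain: "\<forall>X\<in>C. \<forall>Y\<in>C. X \<subseteq> Y \<or> Y \<subseteq> X"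
      by (simp_all add: subset_chain_def)
    have "is_submodule R (\<Union>C)"
      using \<open>C \<noteq> {}\<close> CA chain by (intro is_submodule_Union_chain) blast+
    moreover have "I \<subseteq> \<Union>C"
      using \<open>C \<noteq> {}\<close> CA by blast
    moreover have "1 \<notin> \<Union>C"
      using CA by blast
    ultimately show "\<Union>C \<in> ?A"
      by blast
  qed
  then obtain N where "N \<in> ?A" and max: "\<forall>N'\<in>?A. N \<subseteq> N' \<longrightarrow> N' = N"
    by blast
  show ?thesis
  proof (rule that)
    show "I \<subseteq> N" "is_submodule R N" "1 \<notin> N"
      using \<open>N \<in> ?A\<close> by simp_all
    show "N' = N" if "is_submodule R N'" "N \<subseteq> N'" "1 \<notin> N'" for N'
      using max that \<open>I \<subseteq> N\<close> by blast
  qed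
qed

lemma maximal_ideal_inverse_mod:
  assumes R: "is_subring R" and M: "is_maximal_ideal_of R M"
    and "r \<in> R" and "r \<notin> M"
  shows "\<exists>u\<in>R. \<exists>m\<in>M. 1 = m + u * r"
proof -
  let ?J = "{m + u * r | m u. m \<in> M \<and> u \<in> R}"
  have "M \<subseteq> R" and M_sub: "is_submodule R M"
    using M by (simp_all add: is_maximal_ideal_of_def is_ideal_of_iff_submodule)
  have "?J \<subseteq> R"
    using \<open>M \<subseteq> R\<close> \<open>r \<in> R\<close> subring_mult[OF R] add_subgroup_add[OF subring_add_subgroup[OF R]]
    by blast
  then have "is_ideal_of R ?J"
    using is_submodule_add_multiples[OF R M_sub] by (simp add: is_ideal_of_iff_submodule)
  moreover have "M \<subseteq> ?J"
    using add_subgroup_zero[OF subring_add_subgroup[OF R]] by force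
  moreover have "r \<in> ?J"
    using add_subgroup_zero[OF submodule_add_subgroup[OF M_sub]] subring_one[OF R] by force
  ultimately have "?J = R"
    using M \<open>r \<notin> M\<close> unfolding is_maximal_ideal_of_def by blast
  then show ?thesis
    using subring_one[OF R] by blast
qed

lemma submodule_inter_subset_maximal_ideal:
  assumes R: "is_subring R" and M: "is_maximal_ideal_of R M"
    and N: "is_submodule R N" and "M \<subseteq> N" and "1 \<notin> N"
  shows "R \<inter> N \<subseteq> M"
proof
  fix r assume r: "r \<in> R \<inter> N"
  show "r \<in> M"
  proof (rule ccontr)
    assume "r \<notin> M"
    then obtain u m where "u \<in> R" "m \<in> M" "1 = m + u * r"
      using maximal_ideal_inverse_mod[OF R M] r by blast
    moreover have "m + u * r \<in> N"
      using \<open>M \<subseteq> N\<close> r \<open>m \<in> M\<close> \<open>u \<in> R\<close>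
        add_subgroup_add[OF submodule_add_subgroup[OF N]] submodule_mult[OF N] by blast
    ultimately show False
      using \<open>1 \<notin> N\<close> by simp
  qed
qed

lemma maximal_submodule_has_residues:
  assumes R: "is_subring R" and M: "is_maximal_ideal_of R M"
    and N: "is_submodule R N" and MS: "ext_ideal M \<subseteq> N" and "1 \<notin> N"
    and max: "\<And>N'. is_submodule R N' \<Longrightarrow> N \<subseteq> N' \<Longrightarrow> 1 \<notin> N' \<Longrightarrow> N' = N"
  shows "\<exists>c\<in>R. s - c \<in> N"
proof (cases "s \<in> N")
  case True
  then show ?thesis
    using add_subgroup_zero[OF subring_add_subgroup[OF R]] by force
next
  case False
  note N' = submodule_add_subgroup[OF N]
  let ?N' = "{n + u * s | n u. n \<in> N \<and> u \<in> R}"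
  have "N \<subseteq> ?N'"
    using add_subgroup_zero[OF subring_add_subgroup[OF R]] by force
  moreover have "s \<in> ?N'"
    using add_subgroup_zero[OF N'] subring_one[OF R] by force
  ultimately have "1 \<in> ?N'"
    using max[OF is_submodule_add_multiples[OF R N]] False by blast
  then obtain n u where nu: "1 = n + u * s" "n \<in> N" "u \<in> R"
    by blast
  \<comment> \<open>\<open>u \<in> M\<close> would put \<open>1 = n + u s\<close> in \<open>N\<close>; an inverse \<open>v\<close> of \<open>u\<close> modulo \<open>M\<close> then
    gives \<open>s \<equiv> v u s = v (1 - n) \<equiv> v\<close> modulo \<open>N\<close>.\<close>
  have "u \<notin> M"
  proof
    assume "u \<in> M"
    then have "n + u * s \<in> N"
      using MS mult_mem_ext_ideal nu(2) add_subgroup_add[OF N'] by blast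
    with nu(1) \<open>1 \<notin> N\<close> show False
      by simp
  qed
  then obtain v m where "v \<in> R" "m \<in> M" and vm: "1 = m + v * u"
    using maximal_ideal_inverse_mod[OF R M \<open>u \<in> R\<close>] by blast
  have "s - v = m * s - v * n"
  proof -
    have us: "u * s = 1 - n"
      using nu(1) by (metis add_diff_cancel_left')
    have "s = m * s + v * (u * s)"
      by (metis vm mult_1 distrib_right mult.assoc)
    also have "\<dots> = m * s + v * (1 - n)"
      by (simp only: us)
    finally show ?thesis
      by (simp add: algebra_simps)
  qed
  moreover have "m * s - v * n \<in> N"
    using MS mult_mem_ext_ideal[OF \<open>m \<in> M\<close>] submodule_mult[OF N \<open>v \<in> R\<close> nu(2)]
      add_subgroup_diff[OF N'] by blast
  ultimately have "s - v \<in> N"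
    by simp
  with \<open>v \<in> R\<close> show ?thesis ..
qed

text \<open>A lift to \<open>R\<close> of an \<open>R/M\<close>-linear form \<open>S \<rightarrow> R/M\<close> taking \<open>1\<close> to \<open>1\<close>.\<close>

definition is_residue_form :: "'a::comm_ring_1 set \<Rightarrow> 'a set \<Rightarrow> ('a \<Rightarrow> 'a) \<Rightarrow> bool" where
  "is_residue_form R M c \<longleftrightarrow> (\<forall>s. c s \<in> R) \<and> (\<forall>s s'. c (s + s') - c s - c s' \<in> M) \<and>
     (\<forall>r\<in>R. \<forall>s. c (r * s) - r * c s \<in> M) \<and> c 1 - 1 \<in> M"

lemma exists_residue_form:
  assumes R: "is_subring R" and M: "is_maximal_ideal_of R M"
    and "1 \<notin> ext_ideal M"
  shows "\<exists>c. is_residue_form R M c"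
proof -
  obtain N where MS: "ext_ideal M \<subseteq> N" and N: "is_submodule R N" and "1 \<notin> N"
    and max: "\<And>N'. is_submodule R N' \<Longrightarrow> N \<subseteq> N' \<Longrightarrow> 1 \<notin> N' \<Longrightarrow> N' = N"
    using exists_maximal_submodule_avoiding_one[OF is_submodule_ext_ideal assms(3)] by blast
  obtain c where cR: "\<And>s. c s \<in> R" and cN: "\<And>s. s - c s \<in> N"
    using maximal_submodule_has_residues[OF R M N MS \<open>1 \<notin> N\<close> max] by metis
  note R' = subring_add_subgroup[OF R] and N' = submodule_add_subgroup[OF N]
  have "M \<subseteq> N"
    using MS mult_mem_ext_ideal[of _ M 1] by auto
  then have RN: "d \<in> M" if "d \<in> R" "d \<in> N" for d
    using submodule_inter_subset_maximal_ideal[OF R M N _ \<open>1 \<notin> N\<close>] that by blast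
  have "c (s + s') - c s - c s' \<in> M" for s s'
  proof (rule RN)
    show "c (s + s') - c s - c s' \<in> R"
      using cR add_subgroup_diff[OF R'] by blast
    have "(s - c s) + (s' - c s') - (s + s' - c (s + s')) \<in> N"
      using cN add_subgroup_add[OF N'] add_subgroup_diff[OF N'] by blast
    then show "c (s + s') - c s - c s' \<in> N"
      by (simp add: algebra_simps)
  qed
  moreover have "c (r * s) - r * c s \<in> M" if "r \<in> R" for r s
  proof (rule RN)
    show "c (r * s) - r * c s \<in> R"
      using cR that subring_mult[OF R] add_subgroup_diff[OF R'] by blast
    have "r * (s - c s) - (r * s - c (r * s)) \<in> N"
      using cN that submodule_mult[OF N] add_subgroup_diff[OF N'] by blast
    then show "c (r * s) - r * c s \<in> N"
      by (simp add: algebra_simps)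
  qed
  moreover have "c 1 - 1 \<in> M"
  proof (rule RN)
    show "c 1 - 1 \<in> R"
      using cR subring_one[OF R] add_subgroup_diff[OF R'] by blast
    show "c 1 - 1 \<in> N"
      using add_subgroup_uminus[OF N' cN[of 1]] by simp
  qed
  ultimately show ?thesis
    using cR unfolding is_residue_form_def by blast
qed

definition is_balanced_mod :: "'a::comm_ring_1 set \<Rightarrow> 'b::ab_group_add set \<Rightarrow> ('a \<times> 'a \<Rightarrow> 'b) \<Rightarrow> bool" where
  "is_balanced_mod R I g \<longleftrightarrow>
     (\<forall>s s' t. g (s + s', t) - g (s, t) - g (s', t) \<in> I) \<and>
     (\<forall>s t t'. g (s, t + t') - g (s, t) - g (s, t') \<in> I) \<and>
     (\<forall>r\<in>R. \<forall>s t. g (r * s, t) - g (s, r * t) \<in> I)"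

definition lin_ext :: "('p \<Rightarrow> 'b::ring_1) \<Rightarrow> ('p \<Rightarrow> int) \<Rightarrow> 'b" where
  "lin_ext g x = (\<Sum>q\<in>{q. x q \<noteq> 0}. of_int (x q) * g q)"

lemma lin_ext_eq_sum:
  assumes "finite B" and "{q. x q \<noteq> 0} \<subseteq> B"
  shows "lin_ext g x = (\<Sum>q\<in>B. of_int (x q) * g q)"
  unfolding lin_ext_def using assms by (intro sum.mono_neutral_left) auto

lemma finite_support_gen: "finite {q. gen p q \<noteq> 0}"
  by (simp add: gen_def)

lemma lin_ext_gen: "lin_ext g (gen p) = g p"
  by (simp add: lin_ext_def gen_def)

lemma lin_ext_add:
  assumes "finite {q. x q \<noteq> 0}" and "finite {q. y q \<noteq> 0}"
  shows "lin_ext g (\<lambda>q. x q + y q) = lin_ext g x + lin_ext g y"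
proof -
  let ?B = "{q. x q \<noteq> 0} \<union> {q. y q \<noteq> 0}"
  have fin: "finite ?B"
    using assms by simp
  have "lin_ext g (\<lambda>q. x q + y q) = (\<Sum>q\<in>?B. of_int (x q + y q) * g q)"
    using fin by (rule lin_ext_eq_sum) auto
  also have "\<dots> = (\<Sum>q\<in>?B. of_int (x q) * g q) + (\<Sum>q\<in>?B. of_int (y q) * g q)"
    by (simp add: distrib_right sum.distrib)
  also have "\<dots> = lin_ext g x + lin_ext g y"
    using lin_ext_eq_sum[OF fin, of x g] lin_ext_eq_sum[OF fin, of y g] by simp
  finally show ?thesis .
qed

lemma lin_ext_uminus: "lin_ext g (\<lambda>q. - x q) = - lin_ext g x"
  by (simp add: lin_ext_def sum_negf)

lemma finite_support_add:
  fixes x y :: "'p \<Rightarrow> int"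
  shows "finite {q. x q \<noteq> 0} \<Longrightarrow> finite {q. y q \<noteq> 0} \<Longrightarrow> finite {q. x q + y q \<noteq> 0}"
  by (rule finite_subset[of _ "{q. x q \<noteq> 0} \<union> {q. y q \<noteq> 0}"]) auto

lemma finite_support_diff:
  fixes x y :: "'p \<Rightarrow> int"
  shows "finite {q. x q \<noteq> 0} \<Longrightarrow> finite {q. y q \<noteq> 0} \<Longrightarrow> finite {q. x q - y q \<noteq> 0}"
  by (rule finite_subset[of _ "{q. x q \<noteq> 0} \<union> {q. y q \<noteq> 0}"]) auto

lemma lin_ext_diff:
  assumes "finite {q. x q \<noteq> 0}" and "finite {q. y q \<noteq> 0}"
  shows "lin_ext g (\<lambda>q. x q - y q) = lin_ext g x - lin_ext g y"
  using lin_ext_add[of x "\<lambda>q. - y q" g] assms by (simp add: lin_ext_uminus)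

lemma finite_support_gen_diff: "finite {q. gen p q - gen p' q \<noteq> 0}"
  by (intro finite_support_diff finite_support_gen)

lemma lin_ext_gen_diff: "lin_ext g (\<lambda>q. gen p q - gen p' q) = g p - g p'"
  by (simp add: lin_ext_diff finite_support_gen lin_ext_gen)

lemma finite_support_gen_diff3: "finite {q. gen p q - gen p' q - gen p'' q \<noteq> 0}"
  using finite_support_diff[OF finite_support_gen_diff finite_support_gen] .

lemma lin_ext_gen_diff3: "lin_ext g (\<lambda>q. gen p q - gen p' q - gen p'' q) = g p - g p' - g p''"
  using lin_ext_diff[OF finite_support_gen_diff finite_support_gen, of g p p' p'']
  by (simp add: lin_ext_gen_diff lin_ext_gen)

lemma tensor_rel_lin_ext:
  fixes g :: "'a::comm_ring_1 \<times> 'a \<Rightarrow> 'b::ring_1"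
  assumes "is_add_subgroup I" and "is_balanced_mod R I g"
    and "x \<in> tensor_rel R"
  shows "finite {q. x q \<noteq> 0} \<and> lin_ext g x \<in> I"
  using assms(3)
proof induction
  case zero
  then show ?case using assms(1) by (simp add: lin_ext_def is_add_subgroup_def)
next
  case (addl s s' t)
  then show ?case
    using assms(2) finite_support_gen_diff3
    unfolding lin_ext_gen_diff3 is_balanced_mod_def by blast
next
  case (addr s t t')
  then show ?case
    using assms(2) finite_support_gen_diff3
    unfolding lin_ext_gen_diff3 is_balanced_mod_def by blast
next
  case (bal r s t)
  then show ?case
    using assms(2) finite_support_gen_diff
    unfolding lin_ext_gen_diff is_balanced_mod_def by blast
next
  case (add x y)
  then show ?case
    using assms(1) finite_support_add[of x y] by (simp add: lin_ext_add is_add_subgroup_def)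
next
  case (neg x)
  then show ?case
    using assms(1) by (simp add: lin_ext_uminus is_add_subgroup_def)
qed

lemma tensor_eq_imp_diff_mem:
  fixes g :: "'a::comm_ring_1 \<times> 'a \<Rightarrow> 'b::ring_1"
  assumes "is_add_subgroup I" and "is_balanced_mod R I g"
    and "tensor_eq R p p'"
  shows "g p - g p' \<in> I"
  using tensor_rel_lin_ext[OF assms(1,2) assms(3)[unfolded tensor_eq_def]]
  by (simp add: lin_ext_gen_diff)

lemma strict_closure_subset_if_residue_form:
  assumes "is_residue_form R M c"
  shows "strict_closure R \<subseteq> {r + x | r x. r \<in> R \<and> x \<in> ext_ideal M}"
proof
  fix \<alpha> assume "\<alpha> \<in> strict_closure R"
  then have tensor: "tensor_eq R (\<alpha>, 1) (1, \<alpha>)"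
    by (simp add: strict_closure_def)
  let ?g = "\<lambda>(s, t). c s * t"
  have "is_balanced_mod R (ext_ideal M) ?g"
    unfolding is_balanced_mod_def
  proof (intro conjI allI ballI)
    fix s s' t
    have "c (s + s') * t - c s * t - c s' * t = (c (s + s') - c s - c s') * t"
      by (simp add: algebra_simps)
    then show "?g (s + s', t) - ?g (s, t) - ?g (s', t) \<in> ext_ideal M"
      using assms by (simp add: is_residue_form_def mult_mem_ext_ideal)
    show "?g (s, t + t') - ?g (s, t) - ?g (s, t') \<in> ext_ideal M" for t'
      by (simp add: algebra_simps zero_mem_ext_ideal)
  next
    fix r s t assume "r \<in> R"
    have "c (r * s) * t - c s * (r * t) = (c (r * s) - r * c s) * t"
      by (simp add: algebra_simps)
    then show "?g (r * s, t) - ?g (s, r * t) \<in> ext_ideal M"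
      using assms \<open>r \<in> R\<close> by (simp add: is_residue_form_def mult_mem_ext_ideal)
  qed
  from tensor_eq_imp_diff_mem[OF is_add_subgroup_ext_ideal this tensor]
  have "c \<alpha> - c 1 * \<alpha> \<in> ext_ideal M"
    by simp
  moreover have "(c 1 - 1) * \<alpha> \<in> ext_ideal M"
    using assms by (simp add: is_residue_form_def mult_mem_ext_ideal)
  ultimately have "c \<alpha> - \<alpha> \<in> ext_ideal M"
    using ext_ideal_add by (fastforce simp: algebra_simps)
  then have "\<alpha> - c \<alpha> \<in> ext_ideal M"
    using ext_ideal_mult[of _ M "-1"] by fastforce
  moreover have "c \<alpha> \<in> R"
    using assms by (simp add: is_residue_form_def)
  ultimately show "\<alpha> \<in> {r + x | r x. r \<in> R \<and> x \<in> ext_ideal M}"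
    by force
qed

theorem proposition2p2:
  fixes R M :: "'a::comm_ring_1 set"
  assumes "is_subring R"
    and "is_maximal_ideal_of R M"
  shows "strict_closure R \<subseteq> {r + x | r x. r \<in> R \<and> x \<in> ext_ideal M}"
proof (cases "1 \<in> ext_ideal M")
  case True
  then have "\<alpha> \<in> ext_ideal M" for \<alpha>
    using ext_ideal_mult[of 1 M \<alpha>] by simp
  then show ?thesis
    using add_subgroup_zero[OF subring_add_subgroup[OF assms(1)]] by force
next
  case False
  then obtain c where "is_residue_form R M c"
    using exists_residue_form[OF assms] by blast
  then show ?thesis
    by (rule strict_closure_subset_if_residue_form)
qed

end
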